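(* Let $(S_n)_{n\ge0}$ be defined by $S_0=3$, $S_1=1$, $S_2=3$ and $S_{n+1}=S_n+S_{n-1}+S_{n-2}$ for $n\ge 2$. Let $\alpha,\beta,\gamma$ be the roots of $x^3-x^2-x-1=0$ and $C_n=\alpha^n\beta^n+\alpha^n\gamma^n+\beta^n\gamma^n$ for $n\ge0$. Then for all integers $n,m\ge 0$: if $n\ge m$, $$S_nS_{n+m}=S_{2n+m}+S_mC_n-C_{n-m};$$ if $n<m$, $$S_nS_{n+m}=S_{2n+m}+S_mC_n-S_{m-n}.$$
   Context: $S_n$ is the generalized Lucas (generalized Tribonacci) sequence; it satisfies $S_n=\alpha^n+\beta^n+\gamma^n$. *)

theory Defs
  imports Complex_Main
begin

fun S :: "nat \<Rightarrow> int" where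
  "S 0 = 3"
| "S (Suc 0) = 1"
| "S (Suc (Suc 0)) = 3"
| "S (Suc (Suc (Suc n))) = S (Suc (Suc n)) + S (Suc n) + S n"

definition C :: "complex \<Rightarrow> complex \<Rightarrow> complex \<Rightarrow> nat \<Rightarrow> complex" where
  "C \<alpha> \<beta> \<gamma> n = \<alpha>^n * \<beta>^n + \<alpha>^n * \<gamma>^n + \<beta>^n * \<gamma>^n"

end

theory Submission
  imports Defs
begin

text \<open>
  By Vieta, \<open>S k = \<alpha>^k + \<beta>^k + \<gamma>^k\<close> and \<open>\<alpha>\<beta>\<gamma> = 1\<close>. Expanding
  \<open>(a + b + c)(a x + b y + c z)\<close> with \<open>a = \<alpha>^n\<close>, \<open>x = \<alpha>^m\<close>, etc. gives
  \<open>S n * S (n + m) = S (2n + m) + S m * C n - R\<close> with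
  \<open>R = (\<alpha>\<beta>)^n \<gamma>^m + (\<alpha>\<gamma>)^n \<beta>^m + (\<beta>\<gamma>)^n \<alpha>^m\<close>. As \<open>\<alpha>\<beta>\<gamma> = 1\<close>, the term
  \<open>(\<alpha>\<beta>)^n \<gamma>^m\<close> collapses to \<open>(\<alpha>\<beta>)^(n - m)\<close> if \<open>m \<le> n\<close> and to \<open>\<gamma>^(m - n)\<close>
  if \<open>n \<le> m\<close>, so \<open>R\<close> is \<open>C (n - m)\<close> or \<open>S (m - n)\<close> respectively.
\<close>

lemma tribonacci_vieta:
  fixes \<alpha> \<beta> \<gamma> :: "'a::{idom,ring_char_0}"
  assumes roots: "\<And>x. x^3 - x^2 - x - 1 = (x - \<alpha>) * (x - \<beta>) * (x - \<gamma>)"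
  shows "\<alpha> + \<beta> + \<gamma> = 1" and "\<alpha>*\<beta> + \<alpha>*\<gamma> + \<beta>*\<gamma> = -1" and "\<alpha>*\<beta>*\<gamma> = 1"
proof -
  define s where "s = \<alpha> + \<beta> + \<gamma>"
  define p where "p = \<alpha>*\<beta> + \<alpha>*\<gamma> + \<beta>*\<gamma>"
  show e3: "\<alpha>*\<beta>*\<gamma> = 1"
    using roots[of 0] by simp
  have at_1: "s = p + 2"
    using roots[of 1] e3 unfolding s_def p_def by (simp add: algebra_simps)
  have at_minus_1: "s + p = 0"
    using roots[of "-1"] e3 unfolding s_def p_def by (simp add: algebra_simps)
  have "2 * (p + 1) = 0"
    using at_1 at_minus_1 by (simp add: algebra_simps)
  then have "p + 1 = 0"
    unfolding mult_eq_0_iff by simp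
  then have "p = -1"
    by (simp add: eq_neg_iff_add_eq_0)
  then show "\<alpha>*\<beta> + \<alpha>*\<gamma> + \<beta>*\<gamma> = -1" and "\<alpha> + \<beta> + \<gamma> = 1"
    using at_1 unfolding s_def p_def by simp_all
qed

lemma S_eq_power_sum:
  fixes \<alpha> \<beta> \<gamma> :: "'a::comm_ring_1"
  assumes e1: "\<alpha> + \<beta> + \<gamma> = 1" and e2: "\<alpha>*\<beta> + \<alpha>*\<gamma> + \<beta>*\<gamma> = -1"
    and e3: "\<alpha>*\<beta>*\<gamma> = 1"
  shows "of_int (S n) = \<alpha>^n + \<beta>^n + \<gamma>^n"
proof (induction n rule: S.induct)
  case 1
  then show ?case by simp
next
  case 2
  then show ?case using e1 by simp
next
  case 3
  have "\<alpha>^2 + \<beta>^2 + \<gamma>^2 = (\<alpha> + \<beta> + \<gamma>)^2 - 2 * (\<alpha>*\<beta> + \<alpha>*\<gamma> + \<beta>*\<gamma>)"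
    by (simp add: power2_eq_square algebra_simps)
  also have "\<dots> = 3"
    unfolding e1 e2 by simp
  finally show ?case
    by (simp add: numeral_2_eq_2)
next
  case (4 k)
  have cubic: "x^3 - x^2 - x - 1 = (x - \<alpha>) * (x - \<beta>) * (x - \<gamma>)" for x
  proof -
    have "(x - \<alpha>) * (x - \<beta>) * (x - \<gamma>)
        = x^3 - (\<alpha> + \<beta> + \<gamma>) * x^2 + (\<alpha>*\<beta> + \<alpha>*\<gamma> + \<beta>*\<gamma>) * x - \<alpha>*\<beta>*\<gamma>"
      by (simp add: power2_eq_square power3_eq_cube algebra_simps)
    then show ?thesis
      unfolding e1 e2 e3 by simp
  qed
  have step: "x^(k+3) = x^(k+2) + x^(k+1) + x^k" if "x \<in> {\<alpha>, \<beta>, \<gamma>}" for x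
  proof -
    have "x^3 = x^2 + x + 1"
      using that cubic[of x] by (auto simp: diff_eq_eq)
    then have "x^(k+3) = x^k * (x^2 + x + 1)"
      by (simp add: power_add)
    then show ?thesis
      by (simp add: power_add power2_eq_square algebra_simps)
  qed
  show ?case
    using 4 step by (simp add: numeral_eq_Suc)
qed

lemma sum3_mul_sum3:
  fixes a b c x y z :: "'a::comm_ring"
  shows "(a + b + c) * (a*x + b*y + c*z)
       = (a*a*x + b*b*y + c*c*z) + (x + y + z) * (a*b + a*c + b*c) - (a*b*z + a*c*y + b*c*x)"
  by (simp add: algebra_simps)

lemma power_mul_power_of_mult_eq_1:
  fixes u v :: "'a::comm_monoid_mult"
  assumes "u * v = 1"
  shows "m \<le> n \<Longrightarrow> u^n * v^m = u^(n - m)"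
    and "n \<le> m \<Longrightarrow> u^n * v^m = v^(m - n)"
proof -
  show "u^n * v^m = u^(n - m)" if "m \<le> n"
  proof -
    have "u^n = u^(n - m) * u^m"
      using that by (simp flip: power_add)
    then have "u^n * v^m = u^(n - m) * (u * v)^m"
      by (simp add: power_mult_distrib mult_ac)
    then show ?thesis using assms by simp
  qed
  show "u^n * v^m = v^(m - n)" if "n \<le> m"
  proof -
    have "v^m = v^(m - n) * v^n"
      using that by (simp flip: power_add)
    then have "u^n * v^m = v^(m - n) * (u * v)^n"
      by (simp add: power_mult_distrib mult_ac)
    then show ?thesis using assms by simp
  qed
qed

lemma S_mul_S_add:
  fixes \<alpha> \<beta> \<gamma> :: complex
  assumes S_eq: "\<And>k. of_int (S k) = \<alpha>^k + \<beta>^k + \<gamma>^k"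
  shows "of_int (S n * S (n + m)) = of_int (S (2*n + m)) + of_int (S m) * C \<alpha> \<beta> \<gamma> n
           - ((\<alpha>*\<beta>)^n * \<gamma>^m + (\<alpha>*\<gamma>)^n * \<beta>^m + (\<beta>*\<gamma>)^n * \<alpha>^m)"
  using sum3_mul_sum3[of "\<alpha>^n" "\<beta>^n" "\<gamma>^n" "\<alpha>^m" "\<beta>^m" "\<gamma>^m"]
  by (simp add: S_eq C_def power_add power_mult power2_eq_square power_mult_distrib mult_ac)

theorem mainTheorem3:
  fixes \<alpha> \<beta> \<gamma> :: complex and n m :: nat
  assumes roots: "\<And>x::complex. x^3 - x^2 - x - 1 = (x - \<alpha>) * (x - \<beta>) * (x - \<gamma>)"
  shows "(n \<ge> m \<longrightarrow>
            of_int (S n * S (n + m)) =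
              of_int (S (2*n + m)) + of_int (S m) * C \<alpha> \<beta> \<gamma> n - C \<alpha> \<beta> \<gamma> (n - m))
       \<and> (n < m \<longrightarrow>
            of_int (S n * S (n + m)) =
              of_int (S (2*n + m)) + of_int (S m) * C \<alpha> \<beta> \<gamma> n - of_int (S (m - n)))"
proof -
  note vieta = tribonacci_vieta[OF roots]
  have S_eq: "of_int (S k) = \<alpha>^k + \<beta>^k + \<gamma>^k" for k
    using S_eq_power_sum[OF vieta] .
  have ab: "(\<alpha>*\<beta>) * \<gamma> = 1" and ac: "(\<alpha>*\<gamma>) * \<beta> = 1" and bc: "(\<beta>*\<gamma>) * \<alpha> = 1"
    using vieta(3) by (simp_all add: mult_ac)
  note S_mul = S_mul_S_add[OF S_eq, of n m]
  show ?thesis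
  proof (intro conjI impI)
    assume "m \<le> n"
    then show "of_int (S n * S (n + m)) =
        of_int (S (2*n + m)) + of_int (S m) * C \<alpha> \<beta> \<gamma> n - C \<alpha> \<beta> \<gamma> (n - m)"
      using S_mul power_mul_power_of_mult_eq_1(1)[OF ab] power_mul_power_of_mult_eq_1(1)[OF ac]
        power_mul_power_of_mult_eq_1(1)[OF bc]
      by (simp add: C_def power_mult_distrib)
  next
    assume "n < m"
    then show "of_int (S n * S (n + m)) =
        of_int (S (2*n + m)) + of_int (S m) * C \<alpha> \<beta> \<gamma> n - of_int (S (m - n))"
      using S_mul power_mul_power_of_mult_eq_1(2)[OF ab] power_mul_power_of_mult_eq_1(2)[OF ac]
        power_mul_power_of_mult_eq_1(2)[OF bc]
      by (simp add: S_eq add_ac)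
  qed
qed

end
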